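(* Let $\psi$ be a reduced function with $\delta(\psi)<2$, let $(n_i)_{i\ge1}$ be its associated sequence, and let $(n'_i)_{i\ge1}$ be another increasing sequence of non-negative integers such that $n'_{i+1}=2n'_i-n'_{\psi(i)}$ for all sufficiently large $i$. Then $n'_i/n_i$ has a finite positive limit as $i\to\infty$, and $\delta(\psi)=\limsup_{i\to\infty} n'_{i+1}/n'_i$.
   Context: $\mathcal{A}$ is an alphabet disjoint from $\mathbb{N}^*=\{1,2,\dots\}$. A function here is a map $\psi:\mathbb{N}^*\to\mathbb{N}^*\sqcup\mathcal{A}$ such that for every $n\ge1$ either $\psi(n)\in\mathcal{A}$ or $1\le\psi(n)\le n-1$. Let $(t_k)_{k\ge0}$ be the (finite or infinite) family, in increasing order, of all $n\ge1$ with $\psi(n)\in\mathcal{A}$ or $1\le\psi(n)\le n-2$. $\psi$ is reduced if for every $k\ge1$ such that $t_k$ exists: $\psi(t_k)\ne\psi(t_{k-1})$, and either $\psi(t_k)\in\mathcal{A}$ or $\psi(t_k)<t_{k-1}$. The sequence associated with a reduced $\psi$ is defined by $n_1=0$ and, for $i\ge1$, $n_{i+1}=2n_i-n_{\psi(i)}$ if $\psi(i)\in\mathbb{N}^*$, $n_{i+1}=2n_i+1$ if $\psi(i)\in\mathcal{A}$; and $\delta(\psi)=\limsup_{i\to\infty} n_{i+1}/n_i$. *)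

theory Defs
  imports "HOL-Analysis.Analysis"
begin

text \<open>A function psi : N* -> N* (disjoint union) A is modelled as psi :: nat => nat + 'a,
  where Inl m is the positive integer m and Inr a is the letter a of the alphabet 'a.
  The value at 0 is irrelevant.\<close>

definition is_psi_function :: "(nat \<Rightarrow> nat + 'a) \<Rightarrow> bool" where
  "is_psi_function psi \<longleftrightarrow>
     (\<forall>n\<ge>1. case psi n of Inl m \<Rightarrow> 1 \<le> m \<and> m \<le> n - 1 | Inr _ \<Rightarrow> True)"

definition tset :: "(nat \<Rightarrow> nat + 'a) \<Rightarrow> nat set" where
  "tset psi = {n. n \<ge> 1 \<and> (case psi n of Inl m \<Rightarrow> 1 \<le> m \<and> m + 2 \<le> n | Inr _ \<Rightarrow> True)}"

definition reduced :: "(nat \<Rightarrow> nat + 'a) \<Rightarrow> bool" where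
  "reduced psi \<longleftrightarrow> is_psi_function psi \<and>
     (\<forall>s t. s \<in> tset psi \<and> t \<in> tset psi \<and> s < t \<and> (\<forall>j. s < j \<and> j < t \<longrightarrow> j \<notin> tset psi) \<longrightarrow>
        psi t \<noteq> psi s \<and> (case psi t of Inl m \<Rightarrow> m < s | Inr _ \<Rightarrow> True))"

text \<open>Associated sequence: n_1 = 0, n_(i+1) = 2 n_i - n_(psi i) or 2 n_i + 1.
  (Index 0 is a dummy; the guard j < Suc (Suc i) is automatic for functions psi.)\<close>
function assoc_seq :: "(nat \<Rightarrow> nat + 'a) \<Rightarrow> nat \<Rightarrow> int" where
  "assoc_seq psi 0 = 0"
| "assoc_seq psi (Suc 0) = 0"
| "assoc_seq psi (Suc (Suc i)) =
     (case psi (Suc i) of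
        Inl j \<Rightarrow> (if j < Suc (Suc i) then 2 * assoc_seq psi (Suc i) - assoc_seq psi j else 0)
      | Inr _ \<Rightarrow> 2 * assoc_seq psi (Suc i) + 1)"
  by pat_completeness auto
termination by (relation "Wellfounded.measure (\<lambda>(psi, n). n)") auto

definition delta :: "(nat \<Rightarrow> nat + 'a) \<Rightarrow> ereal" where
  "delta psi = limsup (\<lambda>i. ereal (real_of_int (assoc_seq psi (Suc i)) / real_of_int (assoc_seq psi i)))"

end

theory Submission
  imports Defs
begin

(*
  From some index on, delta psi < 2 forces psi i = Inl (p i) with n_(p i) > c n_i for a fixed
  c > 0, so n and n' satisfy the same recurrence x_(i+1) - x_i = x_i - x_(p i): every increment
  is the sum of the increments over [p i, i). Hence the ratio r_i of the increments of n' and n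
  is a mediant of the earlier ratios r_j, p i <= j < i. This ratio is constant between
  consecutive jumps t_k (the indices with p i <= i - 2). At a jump, reducedness makes the
  previous block enter the mediant with a weight bounded below, while n_(p i) > c n_i confines
  the averaging window to a bounded number of blocks. So the block ratios contract towards each
  other and converge to some L > 0, Stolz-Cesaro gives n'_i / n_i -> L, and a sequence
  asymptotic to a constant multiple of n has the same limsup of successive ratios.
*)

section \<open>Ratios of increments\<close>

lemma diff_bounds_if_increment_bounds:
  fixes a b :: "nat \<Rightarrow> real"
  assumes "P \<le> Q"
    and "\<And>j. P \<le> j \<Longrightarrow> j < Q \<Longrightarrow>
           m * (a (Suc j) - a j) \<le> b (Suc j) - b j \<and> b (Suc j) - b j \<le> M * (a (Suc j) - a j)"
  shows "m * (a Q - a P) \<le> b Q - b P \<and> b Q - b P \<le> M * (a Q - a P)"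
proof -
  have a: "a Q - a P = (\<Sum>j = P..<Q. a (Suc j) - a j)"
    and b: "b Q - b P = (\<Sum>j = P..<Q. b (Suc j) - b j)"
    using sum_Suc_diff'[OF assms(1), where f = a] sum_Suc_diff'[OF assms(1), where f = b] by simp_all
  show ?thesis
    unfolding a b sum_distrib_left using assms(2) by (auto intro: sum_mono)
qed

lemma stolz_cesaro:
  fixes a b :: "nat \<Rightarrow> real"
  assumes inc: "eventually (\<lambda>i. a i < a (Suc i)) sequentially"
    and a_top: "filterlim a at_top sequentially"
    and lim: "(\<lambda>i. (b (Suc i) - b i) / (a (Suc i) - a i)) \<longlonglongrightarrow> L"
  shows "(\<lambda>i. b i / a i) \<longlonglongrightarrow> L"
proof (rule LIMSEQ_I)
  fix r :: real assume r: "r > 0"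
  obtain I where I: "\<And>i. I \<le> i \<Longrightarrow>
      a i < a (Suc i) \<and> dist ((b (Suc i) - b i) / (a (Suc i) - a i)) L < r / 2"
    using eventually_conj[OF inc tendstoD[OF lim, of "r / 2"]] r
    unfolding eventually_sequentially by auto
  define g where "g i = b i - L * a i" for i
  have g_step: "- (r / 2) * (a (Suc i) - a i) \<le> g (Suc i) - g i \<and> g (Suc i) - g i \<le> r / 2 * (a (Suc i) - a i)"
    if "I \<le> i" for i
  proof -
    have pos: "0 < a (Suc i) - a i"
      and close: "\<bar>(b (Suc i) - b i) / (a (Suc i) - a i) - L\<bar> < r / 2"
      using I[OF that] by (auto simp: dist_real_def)
    have "g (Suc i) - g i = ((b (Suc i) - b i) / (a (Suc i) - a i) - L) * (a (Suc i) - a i)"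
      using pos by (simp add: g_def field_simps)
    then have "\<bar>g (Suc i) - g i\<bar> \<le> r / 2 * (a (Suc i) - a i)"
      using pos close by (simp add: abs_mult)
    then show ?thesis unfolding abs_le_iff by linarith
  qed
  have g_drift: "\<bar>g j - g I\<bar> \<le> r / 2 * (a j - a I)" if "I \<le> j" for j
  proof -
    have "- (r / 2) * (a j - a I) \<le> g j - g I \<and> g j - g I \<le> r / 2 * (a j - a I)"
      by (rule diff_bounds_if_increment_bounds[OF that]) (use g_step in auto)
    then show ?thesis unfolding abs_le_iff by linarith
  qed
  obtain M where M: "\<And>j. M \<le> j \<Longrightarrow> 2 * \<bar>g I\<bar> / r + \<bar>a I\<bar> < a j"
    using a_top unfolding filterlim_at_top_dense eventually_sequentially by blast
  show "\<exists>no. \<forall>j\<ge>no. norm (b j / a j - L) < r"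
  proof (intro exI allI impI)
    fix j assume j: "max I M \<le> j"
    have bound: "2 * \<bar>g I\<bar> / r + \<bar>a I\<bar> < a j" using M j by simp
    then have big: "2 * \<bar>g I\<bar> + r * \<bar>a I\<bar> < r * a j"
      using r by (simp add: field_simps)
    have "0 \<le> 2 * \<bar>g I\<bar> / r" using r by simp
    then have aj: "0 < a j" using bound by linarith
    have "- (r * a I) \<le> r * \<bar>a I\<bar>"
      using mult_left_mono[OF abs_ge_minus_self[of "a I"], of r] r by simp
    moreover have "\<bar>g j - g I\<bar> \<le> r * a j / 2 - r * a I / 2"
      using g_drift[of j] j by (simp add: algebra_simps)
    ultimately have "\<bar>g j\<bar> < r * a j" using big by linarith
    moreover have "b j / a j - L = g j / a j" using aj by (simp add: g_def field_simps)
    ultimately show "norm (b j / a j - L) < r" using aj by (simp add: abs_divide pos_divide_less_eq)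
  qed
qed

lemma limsup_ratio_eq_if_quotient_tendsto:
  fixes a b :: "nat \<Rightarrow> real"
  assumes lim: "(\<lambda>i. b i / a i) \<longlonglongrightarrow> L" and L: "L > 0"
  shows "limsup (\<lambda>i. ereal (b (Suc i) / b i)) = limsup (\<lambda>i. ereal (a (Suc i) / a i))"
proof -
  define s where "s i = b i / a i" for i
  have "(\<lambda>i. s (Suc i) / s i) \<longlonglongrightarrow> L / L"
    unfolding s_def using L by (intro tendsto_divide LIMSEQ_Suc lim) auto
  then have ratio_lim: "(\<lambda>i. ereal (s (Suc i) / s i)) \<longlonglongrightarrow> ereal 1"
    using L by (intro tendsto_ereal) simp
  have pos: "eventually (\<lambda>i. s i > 0) sequentially"
    using order_tendstoD(1)[OF lim L] unfolding s_def .
  then have "eventually (\<lambda>i. s (Suc i) > 0) sequentially"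
    using eventually_sequentially_Suc[of "\<lambda>i. 0 < s i"] by blast
  with pos have "eventually (\<lambda>i. ereal (b (Suc i) / b i) =
      ereal (s (Suc i) / s i) * ereal (a (Suc i) / a i)) sequentially"
    by eventually_elim (auto simp: s_def field_simps zero_less_divide_iff)
  then have "limsup (\<lambda>i. ereal (b (Suc i) / b i)) =
      limsup (\<lambda>i. ereal (s (Suc i) / s i) * ereal (a (Suc i) / a i))"
    by (rule Limsup_eq)
  also have "\<dots> = ereal 1 * limsup (\<lambda>i. ereal (a (Suc i) / a i))"
    by (rule ereal_limsup_lim_mult[OF ratio_lim]) auto
  finally show ?thesis by simp
qed

lemma mediant_pulled_towards:
  fixes D E W X Y \<rho> lo hi \<epsilon> :: real
  assumes "D = W + X" "E = W * \<rho> + Y" "lo * X \<le> Y" "Y \<le> hi * X" "lo \<le> \<rho>" "\<rho> \<le> hi"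
    and "\<epsilon> * D \<le> W" "0 < D"
  shows "lo + \<epsilon> * (\<rho> - lo) \<le> E / D \<and> E / D \<le> hi - \<epsilon> * (hi - \<rho>)"
proof -
  have "\<epsilon> * D * (\<rho> - lo) \<le> W * (\<rho> - lo)" "\<epsilon> * D * (hi - \<rho>) \<le> W * (hi - \<rho>)"
    using assms(5-7) by (auto intro: mult_right_mono)
  then have "(lo + \<epsilon> * (\<rho> - lo)) * D \<le> E" "E \<le> (hi - \<epsilon> * (hi - \<rho>)) * D"
    using assms(1-4) by (simp_all add: algebra_simps)
  then show ?thesis using assms(8) by (simp add: pos_le_divide_eq pos_divide_le_eq)
qed


section \<open>Sequences pulled towards their previous value\<close>

(* For k = 0 or C = 0 the window is empty and Min/Max are unspecified; all uses have 1 <= C <= k. *)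
definition window_min :: "(nat \<Rightarrow> real) \<Rightarrow> nat \<Rightarrow> nat \<Rightarrow> real" where
  "window_min x C k = Min (x ` {k - C..<k})"

definition window_max :: "(nat \<Rightarrow> real) \<Rightarrow> nat \<Rightarrow> nat \<Rightarrow> real" where
  "window_max x C k = Max (x ` {k - C..<k})"

lemma window_min_le: "k - C \<le> j \<Longrightarrow> j < k \<Longrightarrow> window_min x C k \<le> x j"
  unfolding window_min_def by (rule Min_le) auto

lemma window_max_ge: "k - C \<le> j \<Longrightarrow> j < k \<Longrightarrow> x j \<le> window_max x C k"
  unfolding window_max_def by (rule Max_ge) auto

lemma window_min_attained:
  assumes "1 \<le> C" "1 \<le> k"
  obtains j where "k - C \<le> j" "j < k" "window_min x C k = x j"
proof -
  have "window_min x C k \<in> x ` {k - C..<k}"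
    unfolding window_min_def using assms by (intro Min_in) auto
  with that show ?thesis by auto
qed

lemma window_max_eq_uminus_min:
  assumes "1 \<le> C" "1 \<le> k"
  shows "window_max x C k = - window_min (\<lambda>j. - x j) C k"
proof -
  have "window_min (\<lambda>j. - x j) C k = Min (uminus ` x ` {k - C..<k})"
    unfolding window_min_def by (simp add: image_image)
  also have "\<dots> = - window_max x C k"
    unfolding window_max_def using minus_Max_eq_Min[of "x ` {k - C..<k}"] assms by simp
  finally show ?thesis by simp
qed

locale window_pull_up =
  fixes x :: "nat \<Rightarrow> real" and C K :: nat and \<epsilon> :: real
  assumes C_pos: "1 \<le> C" and C_le_K: "C \<le> K" and \<epsilon>_pos: "0 < \<epsilon>" and \<epsilon>_le_1: "\<epsilon> \<le> 1"
    and pull_up: "\<And>k. K \<le> k \<Longrightarrow> window_min x C k + \<epsilon> * (x (k - 1) - window_min x C k) \<le> x k"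
begin

lemma prev_above_min: "K \<le> k \<Longrightarrow> window_min x C k \<le> x (k - 1)"
  using C_pos C_le_K by (intro window_min_le) auto

lemma above_min: "K \<le> k \<Longrightarrow> window_min x C k \<le> x k"
  using pull_up[of k] prev_above_min[of k] \<epsilon>_pos by (smt (verit) mult_nonneg_nonneg)

lemma min_Suc: "K \<le> k \<Longrightarrow> window_min x C k \<le> window_min x C (Suc k)"
proof -
  assume k: "K \<le> k"
  obtain j where j: "Suc k - C \<le> j" "j < Suc k" "window_min x C (Suc k) = x j"
    using window_min_attained[of C "Suc k" x] C_pos by auto
  show ?thesis
  proof (cases "j = k")
    case True
    then show ?thesis using j above_min[OF k] by simp
  next
    case False
    then show ?thesis using j window_min_le[of k C j x] by simp
  qed
qed

lemma min_mono:
  assumes "K \<le> k" "k \<le> l"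
  shows "window_min x C k \<le> window_min x C l"
  using assms(2)
proof (induction l rule: dec_induct)
  case (step n)
  then show ?case using min_Suc[of n] assms(1) by simp
qed simp

lemma above_earlier_min: "K \<le> k \<Longrightarrow> k \<le> l \<Longrightarrow> window_min x C k \<le> x l"
  using min_mono[of k l] above_min[of l] by simp

lemma min_gain:
  assumes k: "K \<le> k"
  shows "window_min x C k + \<epsilon> ^ C * (x (k - 1) - window_min x C k) \<le> window_min x C (k + C)"
proof -
  define m where "m = window_min x C k"
  define \<delta> where "\<delta> = x (k - 1) - m"
  have \<delta>: "0 \<le> \<delta>" using prev_above_min[OF k] unfolding \<delta>_def m_def by simp
  \<comment> \<open>each step keeps an \<epsilon>-fraction of the previous excess over m, since the minimum only rises\<close>
  have climb: "\<epsilon> ^ Suc i * \<delta> \<le> x (k + i) - m" for i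
  proof (induction i)
    case 0
    then show ?case using pull_up[OF k] unfolding \<delta>_def m_def by simp
  next
    case (Suc i)
    have "m \<le> window_min x C (k + Suc i)" using min_mono[OF k] unfolding m_def by simp
    then have "(1 - \<epsilon>) * m \<le> (1 - \<epsilon>) * window_min x C (k + Suc i)"
      using \<epsilon>_le_1 by (intro mult_left_mono) auto
    then have "\<epsilon> * (x (k + i) - m) \<le> x (k + Suc i) - m"
      using pull_up[of "k + Suc i"] k by (simp add: algebra_simps)
    moreover have "\<epsilon> * (\<epsilon> ^ Suc i * \<delta>) \<le> \<epsilon> * (x (k + i) - m)"
      using Suc.IH \<epsilon>_pos by simp
    ultimately show ?case by simp
  qed
  obtain j where j: "k + C - C \<le> j" "j < k + C" "window_min x C (k + C) = x j"
    using window_min_attained[of C "k + C" x] C_pos by auto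
  then obtain i where i: "j = k + i" "i < C" by (metis add_less_cancel_left diff_add_inverse2 le_Suc_ex)
  have "\<epsilon> ^ C * \<delta> \<le> \<epsilon> ^ Suc i * \<delta>"
    using i \<epsilon>_pos \<epsilon>_le_1 \<delta> by (intro mult_right_mono power_decreasing) auto
  then show ?thesis using climb[of i] i j unfolding \<delta>_def m_def by simp
qed

end

locale window_contraction = window_pull_up +
  assumes pull_down: "\<And>k. K \<le> k \<Longrightarrow> x k \<le> window_max x C k - \<epsilon> * (window_max x C k - x (k - 1))"
begin

lemma max_eq_uminus_min: "K \<le> k \<Longrightarrow> window_max x C k = - window_min (\<lambda>j. - x j) C k"
  using window_max_eq_uminus_min C_pos C_le_K by simp

sublocale reflected: window_pull_up "\<lambda>j. - x j" C K \<epsilon>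
proof
  fix k assume "K \<le> k"
  then show "window_min (\<lambda>j. - x j) C k + \<epsilon> * (- x (k - 1) - window_min (\<lambda>j. - x j) C k) \<le> - x k"
    using pull_down[of k] max_eq_uminus_min[of k] by (simp add: algebra_simps)
qed (use C_pos C_le_K \<epsilon>_pos \<epsilon>_le_1 in auto)

definition osc :: "nat \<Rightarrow> real" where
  "osc k = window_max x C k - window_min x C k"

lemma between_window_bounds:
  "K \<le> k \<Longrightarrow> k \<le> l \<Longrightarrow> window_min x C k \<le> x l \<and> x l \<le> window_max x C k"
  using above_earlier_min reflected.above_earlier_min max_eq_uminus_min by fastforce

lemma osc_nonneg: "K \<le> k \<Longrightarrow> 0 \<le> osc k"
  using between_window_bounds[of k k] unfolding osc_def by simp

(* The gains of the minimum and of the maximum add up to \<epsilon> ^ C * osc k. *)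
lemma osc_contracts: "K \<le> k \<Longrightarrow> osc (k + C) \<le> (1 - \<epsilon> ^ C) * osc k"
  using min_gain[of k] reflected.min_gain[of k] max_eq_uminus_min[of k] max_eq_uminus_min[of "k + C"]
  unfolding osc_def by (simp add: algebra_simps)

lemma osc_eventually_small:
  assumes e: "0 < e"
  shows "\<exists>n\<ge>K. osc n < e"
proof -
  define \<rho> where "\<rho> = 1 - \<epsilon> ^ C"
  have \<rho>: "0 \<le> \<rho>" "\<rho> < 1"
    unfolding \<rho>_def using \<epsilon>_pos \<epsilon>_le_1 by (auto simp: power_le_one)
  have geometric: "osc (K + i * C) \<le> \<rho> ^ i * osc K" for i
  proof (induction i)
    case (Suc i)
    have "osc (K + Suc i * C) = osc ((K + i * C) + C)" by (simp add: ac_simps)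
    also have "\<dots> \<le> \<rho> * osc (K + i * C)"
      using osc_contracts[of "K + i * C"] unfolding \<rho>_def by simp
    also have "\<dots> \<le> \<rho> * (\<rho> ^ i * osc K)" using Suc.IH \<rho> by (intro mult_left_mono) auto
    finally show ?case by simp
  qed simp
  obtain i where i: "\<rho> ^ i < e / (osc K + 1)"
    using real_arch_pow_inv[of "e / (osc K + 1)" \<rho>] e \<rho> osc_nonneg[of K] by auto
  have "\<rho> ^ i * osc K \<le> \<rho> ^ i * (osc K + 1)" using \<rho> by (intro mult_left_mono) auto
  also have "\<dots> < e" using i osc_nonneg[of K] by (simp add: pos_less_divide_eq)
  finally show ?thesis using geometric[of i] by (intro exI[of _ "K + i * C"]) auto
qed

theorem convergent_above_window_min: "\<exists>L. x \<longlonglongrightarrow> L \<and> window_min x C K \<le> L"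
proof -
  have "Cauchy x"
  proof (rule CauchyI)
    fix e :: real assume "0 < e"
    then obtain n where n: "K \<le> n" "osc n < e" using osc_eventually_small by blast
    have "\<bar>x i - x j\<bar> < e" if "n \<le> i" "n \<le> j" for i j
      using between_window_bounds[OF n(1) that(1)] between_window_bounds[OF n(1) that(2)] n(2)
      unfolding osc_def by linarith
    then show "\<exists>M. \<forall>i\<ge>M. \<forall>j\<ge>M. norm (x i - x j) < e" by auto
  qed
  then obtain L where L: "x \<longlonglongrightarrow> L" using Cauchy_convergent_iff convergent_def by blast
  moreover have "window_min x C K \<le> L"
    using between_window_bounds[of K] by (intro LIMSEQ_le_const[OF L]) auto
  ultimately show ?thesis by blast
qed

end

section \<open>Two sequences obeying a common recurrence\<close>

(*
  a and b play the roles of n and n'. J is the tail beyond N of the family (t_k) of the paper,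
  and p_reduced is reducedness of psi restricted to it.
*)
locale shared_recurrence =
  fixes a b :: "nat \<Rightarrow> real" and p :: "nat \<Rightarrow> nat" and N :: nat and c :: real
  assumes N_pos: "1 \<le> N"
    and p_range: "\<And>i. N \<le> i \<Longrightarrow> 1 \<le> p i \<and> p i < i"
    and a_rec: "\<And>i. N \<le> i \<Longrightarrow> a (Suc i) = 2 * a i - a (p i)"
    and b_rec: "\<And>i. N \<le> i \<Longrightarrow> b (Suc i) = 2 * b i - b (p i)"
    and a_1_nonneg: "0 \<le> a 1"
    and a_step: "\<And>i. 1 \<le> i \<Longrightarrow> 1 \<le> a (Suc i) - a i"
    and b_step: "\<And>i. 1 \<le> i \<Longrightarrow> 0 < b (Suc i) - b i"
    and c_pos: "0 < c"
    and a_p_large: "\<And>i. N \<le> i \<Longrightarrow> c * a i < a (p i)"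
    and p_reduced: "\<And>s t. N \<le> s \<Longrightarrow> s < t \<Longrightarrow> p s + 2 \<le> s \<Longrightarrow> p t + 2 \<le> t \<Longrightarrow>
                     (\<forall>j. s < j \<and> j < t \<longrightarrow> \<not> p j + 2 \<le> j) \<Longrightarrow> p t < s"
begin

definition d :: "nat \<Rightarrow> real" where "d i = a (Suc i) - a i"
definition e :: "nat \<Rightarrow> real" where "e i = b (Suc i) - b i"
definition r :: "nat \<Rightarrow> real" where "r i = e i / d i"

definition J :: "nat set" where "J = {i. N \<le> i \<and> p i + 2 \<le> i}"

lemma a_grows:
  assumes "1 \<le> i" "i \<le> j"
  shows "a i + real (j - i) \<le> a j"
  using assms(2)
proof (induction j rule: dec_induct)
  case (step n)
  then show ?case using a_step[of n] assms(1) by (simp add: Suc_diff_le)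
qed simp

lemma a_mono: "1 \<le> i \<Longrightarrow> i \<le> j \<Longrightarrow> a i \<le> a j"
  using a_grows[of i j] by simp

lemma a_nonneg: "1 \<le> i \<Longrightarrow> 0 \<le> a i"
  using a_mono[of 1 i] a_1_nonneg by simp

lemma a_tendsto_top: "filterlim a at_top sequentially"
proof (rule filterlim_at_top_mono)
  show "filterlim (\<lambda>i. - 1 + real i) at_top sequentially"
    by (rule filterlim_tendsto_add_at_top[OF tendsto_const filterlim_real_sequentially])
  show "eventually (\<lambda>i. - 1 + real i \<le> a i) sequentially"
  proof (rule eventually_sequentiallyI)
    fix i :: nat assume "1 \<le> i"
    then show "- 1 + real i \<le> a i" using a_grows[of 1 i] a_1_nonneg by simp
  qed
qed

lemma d_ge_1: "1 \<le> i \<Longrightarrow> 1 \<le> d i"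
  using a_step unfolding d_def by simp

lemma e_pos: "1 \<le> i \<Longrightarrow> 0 < e i"
  using b_step unfolding e_def by simp

lemma r_pos: "1 \<le> i \<Longrightarrow> 0 < r i"
  using d_ge_1[of i] e_pos[of i] unfolding r_def by simp

lemma d_eq: "N \<le> i \<Longrightarrow> d i = a i - a (p i)"
  using a_rec unfolding d_def by simp

lemma e_eq: "N \<le> i \<Longrightarrow> e i = b i - b (p i)"
  using b_rec unfolding e_def by simp

lemma increments_Suc_eq_if_not_in_J:
  assumes "N \<le> Suc i" "Suc i \<notin> J"
  shows "d (Suc i) = d i \<and> e (Suc i) = e i"
proof -
  have "p (Suc i) = i" using p_range[OF assms(1)] assms unfolding J_def by auto
  then show ?thesis using d_eq[OF assms(1)] e_eq[OF assms(1)] unfolding d_def e_def by simp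
qed

lemma diff_bounds_if_ratio_bounds:
  assumes "1 \<le> P" "P \<le> Q" and bounds: "\<And>j. P \<le> j \<Longrightarrow> j < Q \<Longrightarrow> lo \<le> r j \<and> r j \<le> hi"
  shows "lo * (a Q - a P) \<le> b Q - b P \<and> b Q - b P \<le> hi * (a Q - a P)"
proof (rule diff_bounds_if_increment_bounds[OF assms(2)])
  fix j assume j: "P \<le> j" "j < Q"
  have "0 < d j" using d_ge_1[of j] j assms(1) by simp
  then have "lo * d j \<le> e j \<and> e j \<le> hi * d j"
    using bounds[OF j] unfolding r_def by (simp add: pos_le_divide_eq pos_divide_le_eq)
  then show "lo * (a (Suc j) - a j) \<le> b (Suc j) - b j \<and> b (Suc j) - b j \<le> hi * (a (Suc j) - a j)"
    unfolding d_def e_def .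
qed

lemma r_converges_if_J_finite:
  assumes "finite J"
  shows "\<exists>L>0. r \<longlonglongrightarrow> L"
proof -
  obtain n where n: "N \<le> n" "\<And>i. n \<le> i \<Longrightarrow> i \<notin> J"
    using assms finite_nat_set_iff_bounded_le by (metis le_trans nle_le not_less_eq_eq)
  have "r i = r n" if "n \<le> i" for i
    using that
  proof (induction i rule: dec_induct)
    case (step i)
    then show ?case using increments_Suc_eq_if_not_in_J[of i] n unfolding r_def by simp
  qed simp
  then have "r \<longlonglongrightarrow> r n"
    by (intro tendsto_eventually eventually_sequentiallyI)
  moreover have "0 < r n" using r_pos n N_pos by simp
  ultimately show ?thesis by blast
qed

end

locale shared_recurrence_infinite_jumps = shared_recurrence +
  assumes J_infinite: "infinite J"
begin

abbreviation t :: "nat \<Rightarrow> nat" where "t \<equiv> enumerate J"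

lemma t_in_J: "t k \<in> J"
  using enumerate_in_set[OF J_infinite] .

lemma t_less_iff [simp]: "t k < t l \<longleftrightarrow> k < l"
  using enumerate_mono_iff[OF J_infinite] .

lemma t_le_iff [simp]: "t k \<le> t l \<longleftrightarrow> k \<le> l"
  using enumerate_mono_le_iff[OF J_infinite] .

lemma t_ge_N: "N \<le> t k"
  using t_in_J unfolding J_def by simp

lemma t_pos: "1 \<le> t k"
  using t_ge_N N_pos order_trans by blast

lemma p_t_le: "p (t k) + 2 \<le> t k"
  using t_in_J unfolding J_def by simp

lemma not_in_J_between: "t k < j \<Longrightarrow> j < t (Suc k) \<Longrightarrow> j \<notin> J"
  using enumerate_Ex[OF J_infinite, of j] by auto

lemma increments_const_on_block:
  assumes "t k \<le> j" "j < t (Suc k)"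
  shows "d j = d (t k) \<and> e j = e (t k)"
  using assms
proof (induction j rule: dec_induct)
  case (step n)
  have "N \<le> Suc n" using step(1) t_ge_N[of k] by simp
  moreover have "Suc n \<notin> J" using step by (intro not_in_J_between) auto
  ultimately show ?case using increments_Suc_eq_if_not_in_J[of n] step by simp
qed simp

lemma in_block_after:
  assumes "t K \<le> i"
  obtains k where "K \<le> k" "t k \<le> i" "i < t (Suc k)"
proof -
  have "\<exists>k\<ge>K. t k \<le> i \<and> i < t (Suc k)"
    using assms
  proof (induction i rule: dec_induct)
    case base
    then show ?case by (intro exI[of _ K]) simp
  next
    case (step n)
    then obtain k where k: "K \<le> k" "t k \<le> n" "n < t (Suc k)" by blast
    then show ?case
      by (cases "Suc n = t (Suc k)") (auto intro: exI[of _ k] exI[of _ "Suc k"])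
  qed
  with that show ?thesis by blast
qed

lemma p_next_jump_before: "p (t (Suc k)) < t k"
proof (rule p_reduced)
  show "\<forall>j. t k < j \<and> j < t (Suc k) \<longrightarrow> \<not> p j + 2 \<le> j"
    using not_in_J_between t_ge_N[of k] unfolding J_def by fastforce
qed (use t_ge_N p_t_le in simp_all)

definition D :: "nat \<Rightarrow> real" where "D k = d (t k)"
definition E :: "nat \<Rightarrow> real" where "E k = e (t k)"
definition R :: "nat \<Rightarrow> real" where "R k = r (t k)"
definition u :: "nat \<Rightarrow> real" where "u k = a (t k)"
definition l :: "nat \<Rightarrow> real" where "l k = real (t (Suc k) - t k)"

lemma D_ge_1: "1 \<le> D k"
  using d_ge_1 t_pos unfolding D_def by simp

lemma l_ge_1: "1 \<le> l k"
  using t_less_iff[of k "Suc k"] unfolding l_def by linarith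

lemma R_eq: "R k = E k / D k"
  unfolding R_def E_def D_def r_def ..

lemma r_eq_R_on_block: "t k \<le> j \<Longrightarrow> j < t (Suc k) \<Longrightarrow> r j = R k"
  using increments_const_on_block unfolding r_def R_def by simp

lemma linear_on_block:
  assumes "t k \<le> j" "j \<le> t (Suc k)"
  shows "a j = u k + real (j - t k) * D k \<and> b j = b (t k) + real (j - t k) * E k"
  using assms
proof (induction j rule: dec_induct)
  case (step n)
  then have "d n = D k \<and> e n = E k"
    using increments_const_on_block[of k n] unfolding D_def E_def by simp
  moreover have "real (Suc n - t k) = real (n - t k) + 1" using step(1) by (simp add: Suc_diff_le)
  ultimately show ?case using step unfolding d_def e_def by (simp add: algebra_simps)
qed (simp add: u_def)

lemma u_Suc: "u (Suc k) = u k + l k * D k"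
  using linear_on_block[of k "t (Suc k)"] unfolding u_def l_def by simp

lemma b_at_next_jump: "b (t (Suc k)) = b (t k) + l k * E k"
  using linear_on_block[of k "t (Suc k)"] unfolding l_def by simp

lemma D_eq: "D k = u k - a (p (t k))"
  using d_eq[OF t_ge_N] unfolding D_def u_def .

lemma D_le_u: "D k \<le> u k"
  using D_eq[of k] a_nonneg p_range[OF t_ge_N, of k] by simp

lemma D_Suc_ge: "l k * D k \<le> D (Suc k)"
proof -
  have "a (p (t (Suc k))) \<le> u k"
    using a_mono p_range[OF t_ge_N] p_next_jump_before[of k] unfolding u_def by simp
  then show ?thesis using D_eq[of "Suc k"] u_Suc[of k] by simp
qed

lemma D_le_l_D: "D k \<le> l k * D k"
  using mult_right_mono[OF l_ge_1[of k], of "D k"] D_ge_1[of k] by simp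

lemma D_mono: "D k \<le> D (Suc k)"
  using D_Suc_ge[of k] D_le_l_D[of k] by simp

lemma D_Suc_Suc_ge: "l (Suc k) * D (Suc k) + D k \<le> D (Suc (Suc k))"
proof -
  let ?q = "t (Suc k) - 1"
  have q: "t k \<le> ?q" "?q < t (Suc k)" using t_less_iff[of k "Suc k"] by linarith+
  have "a (p (t (Suc (Suc k)))) \<le> a ?q"
    using a_mono p_range[OF t_ge_N] p_next_jump_before[of "Suc k"] by simp
  moreover have "u (Suc k) = a ?q + D k"
    using q increments_const_on_block[OF q] unfolding u_def D_def d_def by simp
  ultimately show ?thesis using D_eq[of "Suc (Suc k)"] u_Suc[of "Suc k"] by simp
qed

lemma D_doubles: "2 ^ m * D k \<le> D (k + 2 * m)"
proof (induction m)
  case (Suc m)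
  have "2 * D (k + 2 * m) \<le> D (k + 2 * m + 2)"
    using D_Suc_Suc_ge[of "k + 2 * m"] D_mono[of "k + 2 * m"] D_le_l_D[of "Suc (k + 2 * m)"]
    by (simp add: numeral_2_eq_2)
  then show ?case using Suc.IH by (simp add: add.assoc)
qed simp

definition B :: real where "B = 3 + max 0 (u 1 - 2 * D 1 - D 0)"

lemma B_ge_3: "3 \<le> B"
  unfolding B_def by simp

lemma u_Suc_le: "u (Suc k) \<le> 2 * D (Suc k) + D k + (B - 3)"
proof (induction k)
  case 0
  then show ?case unfolding B_def by simp
next
  case (Suc k)
  then show ?case using u_Suc[of "Suc k"] D_Suc_Suc_ge[of k] D_mono[of "Suc k"] by linarith
qed

lemma u_le_B_D:
  assumes "1 \<le> k"
  shows "u k \<le> B * D k"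
proof -
  obtain k' where k': "k = Suc k'" using assms by (cases k) auto
  have "B - 3 \<le> (B - 3) * D k"
    using mult_left_mono[OF D_ge_1[of k], of "B - 3"] B_ge_3 by simp
  then show ?thesis
    using u_Suc_le[of k'] D_mono[of k'] k' by (simp add: algebra_simps)
qed

lemma D_Suc_le:
  assumes "1 \<le> k"
  shows "D (Suc k) \<le> (B + 1) * (l k * D k)"
proof -
  have "B * D k \<le> B * (l k * D k)"
    using D_le_l_D[of k] B_ge_3 by (intro mult_left_mono) auto
  then show ?thesis
    using D_le_u[of "Suc k"] u_Suc[of k] u_le_B_D[OF assms] by (simp add: algebra_simps)
qed

lemma R_pos: "0 < R k"
  using r_pos t_pos unfolding R_def by simp

(*
  Since D at least doubles every two blocks while u k <= B * D k, the condition c * a i < a (p i)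
  keeps p (t (Suc k)) within the last 2 m blocks.
*)
lemma window_start_before_p:
  assumes m: "B < 2 ^ m * c" and k: "2 * m \<le> k"
  shows "t (Suc k - 2 * m) \<le> p (t (Suc k))"
proof (rule ccontr)
  let ?j = "Suc k - 2 * m"
  assume "\<not> t ?j \<le> p (t (Suc k))"
  then have "a (p (t (Suc k))) \<le> u ?j"
    unfolding u_def using p_range[OF t_ge_N] by (intro a_mono) auto
  also have "\<dots> \<le> B * D ?j" using k by (intro u_le_B_D) simp
  also have "\<dots> < c * (2 ^ m * D ?j)" using m D_ge_1[of ?j] by (simp add: mult_ac)
  also have "\<dots> \<le> c * D (Suc k)"
    using D_doubles[of m ?j] k c_pos by (intro mult_left_mono) auto
  also have "\<dots> \<le> c * u (Suc k)" using D_le_u c_pos by simp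
  also have "\<dots> < a (p (t (Suc k)))" using a_p_large[OF t_ge_N] unfolding u_def .
  finally show False ..
qed

lemma r_in_window:
  assumes j: "t (Suc k - C) \<le> j" "j < t (Suc k)"
  shows "window_min R C (Suc k) \<le> r j \<and> r j \<le> window_max R C (Suc k)"
proof -
  obtain k' where k': "Suc k - C \<le> k'" "t k' \<le> j" "j < t (Suc k')"
    using in_block_after[OF j(1)] .
  have "t k' < t (Suc k)" using k' j by linarith
  then have "k' < Suc k" by simp
  then show ?thesis
    using k' r_eq_R_on_block[OF k'(2,3)] window_min_le[of "Suc k" C k' R] window_max_ge[of "Suc k" C k' R]
    by simp
qed

(*
  D (Suc k) is the increment l k * D k of the last block plus the increments over
  [p (t (Suc k)), t k), whose ratios lie in the window; D_Suc_le gives the last block a share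
  of at least 1 / (B + 1).
*)
lemma R_Suc_pulled_towards_R:
  assumes m: "B < 2 ^ m * c" "1 \<le> m" and k: "2 * m \<le> k"
  defines "lo \<equiv> window_min R (2 * m) (Suc k)" and "hi \<equiv> window_max R (2 * m) (Suc k)"
  shows "lo + 1 / (B + 1) * (R k - lo) \<le> R (Suc k) \<and> R (Suc k) \<le> hi - 1 / (B + 1) * (hi - R k)"
proof -
  define P where "P = p (t (Suc k))"
  have P: "1 \<le> P" "P \<le> t k"
    using p_range[OF t_ge_N] p_next_jump_before[of k] unfolding P_def by (auto simp: less_imp_le)
  have jump: "t k < t (Suc k)" by simp
  have "t (Suc k - 2 * m) \<le> P" unfolding P_def by (rule window_start_before_p[OF m(1) k])
  then have "lo * (u k - a P) \<le> b (t k) - b P \<and> b (t k) - b P \<le> hi * (u k - a P)"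
    unfolding u_def lo_def hi_def
    by (intro diff_bounds_if_ratio_bounds[OF P] r_in_window) (auto intro: less_trans[OF _ jump])
  moreover have "lo \<le> R k" "R k \<le> hi"
    using m(2) k window_min_le[of "Suc k" "2 * m" k R] window_max_ge[of "Suc k" "2 * m" k R]
    unfolding lo_def hi_def by simp_all
  moreover have "D (Suc k) = l k * D k + (u k - a P)"
    using D_eq[of "Suc k"] u_Suc[of k] unfolding P_def by simp
  moreover have "E (Suc k) = l k * D k * R k + (b (t k) - b P)"
    using e_eq[OF t_ge_N, of "Suc k"] b_at_next_jump[of k] D_ge_1[of k]
    unfolding P_def E_def R_eq by (simp add: E_def)
  moreover have "1 / (B + 1) * D (Suc k) \<le> l k * D k"
    using D_Suc_le[of k] m(2) k B_ge_3 by (simp add: field_simps)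
  ultimately have "lo + 1 / (B + 1) * (R k - lo) \<le> E (Suc k) / D (Suc k) \<and>
      E (Suc k) / D (Suc k) \<le> hi - 1 / (B + 1) * (hi - R k)"
    using D_ge_1[of "Suc k"] by (intro mediant_pulled_towards) auto
  then show ?thesis by (simp add: R_eq)
qed

lemma R_converges: "\<exists>L>0. R \<longlonglongrightarrow> L"
proof -
  obtain n where "B / c < 2 ^ n" using real_arch_pow[of 2 "B / c"] by auto
  also have "\<dots> \<le> 2 ^ Suc n" by simp
  finally have m: "B < 2 ^ Suc n * c" using c_pos by (simp add: pos_divide_less_eq)
  define m where "m = Suc n"
  interpret window_contraction R "2 * m" "Suc (2 * m)" "1 / (B + 1)"
  proof
    fix k' assume "Suc (2 * m) \<le> k'"
    then obtain k where k: "k' = Suc k" "2 * m \<le> k" by (cases k') auto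
    show "window_min R (2 * m) k' + 1 / (B + 1) * (R (k' - 1) - window_min R (2 * m) k') \<le> R k'"
      "R k' \<le> window_max R (2 * m) k' - 1 / (B + 1) * (window_max R (2 * m) k' - R (k' - 1))"
      using R_Suc_pulled_towards_R[OF m[folded m_def] _ k(2)] k(1) unfolding m_def by simp_all
  qed (use B_ge_3 m_def in auto)
  obtain L where L: "R \<longlonglongrightarrow> L" "window_min R (2 * m) (Suc (2 * m)) \<le> L"
    using convergent_above_window_min by blast
  obtain j where "window_min R (2 * m) (Suc (2 * m)) = R j"
    using window_min_attained[of "2 * m" "Suc (2 * m)" R] m_def by auto
  then have "0 < L" using R_pos[of j] L(2) by simp
  with L(1) show ?thesis by blast
qed

lemma r_converges_if_J_infinite: "\<exists>L>0. r \<longlonglongrightarrow> L"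
proof -
  obtain L where L: "0 < L" "R \<longlonglongrightarrow> L" using R_converges by blast
  have "r \<longlonglongrightarrow> L"
  proof (rule LIMSEQ_I)
    fix \<delta> :: real assume "0 < \<delta>"
    then obtain K where K: "\<And>k. K \<le> k \<Longrightarrow> norm (R k - L) < \<delta>"
      using LIMSEQ_D[OF L(2)] by blast
    have "norm (r i - L) < \<delta>" if i: "t K \<le> i" for i
    proof -
      obtain k where k: "K \<le> k" "t k \<le> i" "i < t (Suc k)" by (rule in_block_after[OF i])
      then show ?thesis using K r_eq_R_on_block[OF k(2,3)] by simp
    qed
    then show "\<exists>n. \<forall>i\<ge>n. norm (r i - L) < \<delta>" by blast
  qed
  with L(1) show ?thesis by blast
qed

end

context shared_recurrence
begin

lemma r_converges: "\<exists>L>0. r \<longlonglongrightarrow> L"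
proof (cases "finite J")
  case True
  then show ?thesis by (rule r_converges_if_J_finite)
next
  case False
  then interpret shared_recurrence_infinite_jumps a b p N c by unfold_locales
  show ?thesis by (rule r_converges_if_J_infinite)
qed

theorem quotient_converges: "\<exists>L>0. (\<lambda>i. b i / a i) \<longlonglongrightarrow> L"
proof -
  obtain L where L: "0 < L" "r \<longlonglongrightarrow> L" using r_converges by blast
  have "eventually (\<lambda>i. a i < a (Suc i)) sequentially"
    using a_step by (intro eventually_sequentiallyI[of 1]) force
  then have "(\<lambda>i. b i / a i) \<longlonglongrightarrow> L"
    using a_tendsto_top L(2) unfolding r_def[abs_def] d_def e_def by (rule stolz_cesaro)
  with L(1) show ?thesis by blast
qed

end

section \<open>Reduced functions\<close>

lemma psi_Inl_range: "is_psi_function psi \<Longrightarrow> 1 \<le> i \<Longrightarrow> psi i = Inl j \<Longrightarrow> 1 \<le> j \<and> j < i"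
  unfolding is_psi_function_def by (metis One_nat_def Suc_le_lessD Suc_pred le_imp_less_Suc old.sum.simps(5))

lemma assoc_seq_Suc:
  assumes "is_psi_function psi" "1 \<le> i"
  shows "assoc_seq psi (Suc i) = (case psi i of
           Inl j \<Rightarrow> 2 * assoc_seq psi i - assoc_seq psi j
         | Inr _ \<Rightarrow> 2 * assoc_seq psi i + 1)"
proof -
  obtain i' where i': "i = Suc i'" using assms(2) by (cases i) auto
  show ?thesis
    using psi_Inl_range[OF assms] i' by (cases "psi i") auto
qed

lemma assoc_seq_grows:
  assumes psi: "is_psi_function psi" and "1 \<le> i"
  shows "\<forall>j. 1 \<le> j \<and> j \<le> i \<longrightarrow> 0 \<le> assoc_seq psi j \<and> assoc_seq psi j + int (i - j) \<le> assoc_seq psi i"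
  using assms(2)
proof (induction i rule: dec_induct)
  case base
  then show ?case by (auto simp: le_antisym)
next
  case (step i)
  let ?n = "assoc_seq psi"
  have "?n i + 1 \<le> ?n (Suc i)"
  proof (cases "psi i")
    case (Inl j)
    then have "1 \<le> j" "j < i" using psi_Inl_range[OF psi step(1)] by auto
    then have "?n j + 1 \<le> ?n i" using step.IH by force
    then show ?thesis using assoc_seq_Suc[OF psi step(1)] Inl by simp
  next
    case (Inr x)
    then show ?thesis using assoc_seq_Suc[OF psi step(1)] step.IH step(1) by auto
  qed
  moreover have "0 \<le> ?n i" using step.IH step(1) by auto
  ultimately show ?case using step.IH by (auto simp: le_Suc_eq)
qed

lemma assoc_seq_step: "is_psi_function psi \<Longrightarrow> 1 \<le> i \<Longrightarrow> assoc_seq psi i + 1 \<le> assoc_seq psi (Suc i)"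
  using assoc_seq_grows[of psi "Suc i"] by force

lemma assoc_seq_ge: "is_psi_function psi \<Longrightarrow> 1 \<le> i \<Longrightarrow> int i - 1 \<le> assoc_seq psi i"
  using assoc_seq_grows[of psi i] by force

lemma psi_eventually_Inl_far:
  assumes psi: "is_psi_function psi" and delta: "delta psi < 2"
  obtains c N where "0 < c" "1 \<le> N"
    "\<And>i. N \<le> i \<Longrightarrow> \<exists>j. psi i = Inl j \<and>
        c * real_of_int (assoc_seq psi i) < real_of_int (assoc_seq psi j)"
proof -
  let ?a = "\<lambda>i. real_of_int (assoc_seq psi i)"
  obtain q where q: "delta psi < ereal q" "q < 2"
    using ereal_dense2[OF delta] by auto
  obtain N where N: "\<And>i. N \<le> i \<Longrightarrow> ?a (Suc i) / ?a i < q"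
    using Limsup_lessD[OF q(1)[unfolded delta_def]] by (auto simp: eventually_sequentially)
  have "\<exists>j. psi i = Inl j \<and> (2 - q) * ?a i < ?a j" if i: "max N 2 \<le> i" for i
  proof -
    have "1 \<le> ?a i" using assoc_seq_ge[OF psi, of i] i by simp
    then have less: "?a (Suc i) < q * ?a i" using N[of i] i by (simp add: pos_divide_less_eq)
    show ?thesis
    proof (cases "psi i")
      case (Inl j)
      then show ?thesis using less assoc_seq_Suc[OF psi, of i] i by (auto simp: algebra_simps)
    next
      case (Inr x)
      have "q * ?a i < 2 * ?a i" using q(2) \<open>1 \<le> ?a i\<close> by simp
      then show ?thesis using less Inr assoc_seq_Suc[OF psi, of i] i by simp
    qed
  qed
  then show ?thesis using that[of "2 - q" "max N 2"] q(2) by simp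
qed

lemma reduced_psi_shared_recurrence:
  fixes psi :: "nat \<Rightarrow> nat + 'a" and n' :: "nat \<Rightarrow> int"
  assumes reduced: "reduced psi" and delta: "delta psi < 2"
    and n'_mono: "\<forall>i j. 1 \<le> i \<and> i < j \<longrightarrow> n' i < n' j"
    and n'_rec: "\<exists>N. \<forall>i\<ge>N. \<forall>j. psi i = Inl j \<longrightarrow> n' (Suc i) = 2 * n' i - n' j"
  obtains p N c where "shared_recurrence (\<lambda>i. real_of_int (assoc_seq psi i)) (\<lambda>i. real_of_int (n' i)) p N c"
proof -
  have psi: "is_psi_function psi" using reduced unfolding reduced_def by simp
  obtain c N1 where c: "0 < c" "1 \<le> N1" and far: "\<And>i. N1 \<le> i \<Longrightarrow> \<exists>j. psi i = Inl j \<and>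
      c * real_of_int (assoc_seq psi i) < real_of_int (assoc_seq psi j)"
    using psi_eventually_Inl_far[OF psi delta] by blast
  obtain N2 where N2: "\<And>i j. N2 \<le> i \<Longrightarrow> psi i = Inl j \<Longrightarrow> n' (Suc i) = 2 * n' i - n' j"
    using n'_rec by blast
  define N where "N = max N1 N2"
  define p where "p i = (case psi i of Inl j \<Rightarrow> j | Inr _ \<Rightarrow> 0)" for i
  have psi_p: "psi i = Inl (p i)"
    and p_far: "c * real_of_int (assoc_seq psi i) < real_of_int (assoc_seq psi (p i))"
    and p_range: "1 \<le> p i \<and> p i < i" if "N \<le> i" for i
    using far[of i] psi_Inl_range[OF psi, of i] that c(2) unfolding N_def p_def by auto
  have tset_iff: "i \<in> tset psi \<longleftrightarrow> p i + 2 \<le> i" if "N \<le> i" for i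
    using psi_p[OF that] p_range[OF that] unfolding tset_def by auto
  have a_step: "1 \<le> real_of_int (assoc_seq psi (Suc i)) - real_of_int (assoc_seq psi i)"
    if "1 \<le> i" for i
  proof -
    have "real_of_int (assoc_seq psi i + 1) \<le> real_of_int (assoc_seq psi (Suc i))"
      by (simp only: of_int_le_iff assoc_seq_step[OF psi that])
    then show ?thesis by simp
  qed
  have "shared_recurrence (\<lambda>i. real_of_int (assoc_seq psi i)) (\<lambda>i. real_of_int (n' i)) p N c"
  proof
    fix s t assume st: "N \<le> s" "s < t" "p s + 2 \<le> s" "p t + 2 \<le> t"
      "\<forall>j. s < j \<and> j < t \<longrightarrow> \<not> p j + 2 \<le> j"
    then have "case psi t of Inl m \<Rightarrow> m < s | Inr _ \<Rightarrow> True"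
      using reduced tset_iff unfolding reduced_def by (metis less_imp_le order_trans)
    then show "p t < s" using psi_p[of t] st by simp
  qed (use c N_def psi_p p_far p_range N2 n'_mono assoc_seq_Suc[OF psi] a_step in auto)
  with that show ?thesis .
qed

theorem proposition6p2:
  fixes psi :: "nat \<Rightarrow> nat + 'a" and n' :: "nat \<Rightarrow> int"
  assumes "reduced psi"
    and "delta psi < 2"
    and "\<forall>i\<ge>1. n' i \<ge> 0"
    and "\<forall>i j. 1 \<le> i \<and> i < j \<longrightarrow> n' i < n' j"
    and "\<exists>N. \<forall>i\<ge>N. \<forall>j. psi i = Inl j \<longrightarrow> n' (Suc i) = 2 * n' i - n' j"
  shows "(\<exists>L::real. L > 0 \<and>
            (\<lambda>i. real_of_int (n' i) / real_of_int (assoc_seq psi i)) \<longlonglongrightarrow> L)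
         \<and> delta psi = limsup (\<lambda>i. ereal (real_of_int (n' (Suc i)) / real_of_int (n' i)))"
proof -
  obtain p N c where
    "shared_recurrence (\<lambda>i. real_of_int (assoc_seq psi i)) (\<lambda>i. real_of_int (n' i)) p N c"
    using reduced_psi_shared_recurrence[OF assms(1,2,4,5)] .
  then obtain L where L: "0 < L" "(\<lambda>i. real_of_int (n' i) / real_of_int (assoc_seq psi i)) \<longlonglongrightarrow> L"
    using shared_recurrence.quotient_converges by blast
  moreover have "delta psi = limsup (\<lambda>i. ereal (real_of_int (n' (Suc i)) / real_of_int (n' i)))"
    unfolding delta_def using limsup_ratio_eq_if_quotient_tendsto[OF L(2,1)] by simp
  ultimately show ?thesis by blast
qed

end
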